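(* Let $\lambda>0$ and $g_l^*>0$. Let $I$ be a finite instance set with real gradients $g_i$, and let $I_f=\{i\in I: |g_i|>g_l^*\}$ and $I_f^c=I\setminus I_f$; assume $I_f\neq\emptyset$. Let $p=\frac{|I_f|}{|I|}$ and $\bar g_f=\frac{\sum_{i\in I_f}g_i}{|I_f|}$. With the leaf value $V(J)=-\frac{\sum_{i\in J}g_i}{|J|+\lambda}$ for finite sets $J$, define $\xi_I=|V(I)-V(I_f^c)|$. Then $\xi_I\le p\,(|\bar g_f|+g_l^* )$.
   Context: $I_f$ is the set of instances removed by gradient-based data filtering with threshold $g_l^*$ (instances whose gradient has absolute value exceeding $g_l^*$), and $I_f^c$ is the set of remaining instances. *)

theory Defs
  imports Complex_Main
begin

definition leaf_value :: "('a \<Rightarrow> real) \<Rightarrow> real \<Rightarrow> 'a set \<Rightarrow> real" where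
  "leaf_value g lam J = - (\<Sum>i\<in>J. g i) / (real (card J) + lam)"

end

theory Submission
  imports Defs
begin

text \<open>Write k = |F|, m = |I - F|, n = k + m, and \<open>S\<^sub>F\<close>, \<open>S\<^sub>C\<close> for the gradient sums
  over F and I - F. Then \<open>V(I) - V(I - F) = - S\<^sub>F / (n + \<lambda>) + S\<^sub>C k / ((m + \<lambda>)(n + \<lambda>))\<close>.
  The first term is at most \<open>\<bar>S\<^sub>F\<bar> / n\<close>; the retained gradients are bounded by c, so
  \<open>\<bar>S\<^sub>C\<bar> \<le> m c\<close> and the second term is at most \<open>m c k / ((m + \<lambda>) n) \<le> k c / n\<close>.\<close>

lemma removal_shift_eq:
  fixes Sf Sc k m lam :: real
  assumes "m + lam \<noteq> 0" "k + m + lam \<noteq> 0"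
  shows "- (Sf + Sc) / (k + m + lam) + Sc / (m + lam)
         = - Sf / (k + m + lam) + Sc * k / ((m + lam) * (k + m + lam))"
  using assms by (simp add: divide_simps) (simp add: algebra_simps)

lemma removal_shift_bound:
  fixes Sf Sc k m lam c :: real
  assumes k: "k > 0" and m: "m \<ge> 0" and lam: "lam > 0" and c: "c \<ge> 0"
    and Sc: "\<bar>Sc\<bar> \<le> m * c"
  shows "\<bar>- (Sf + Sc) / (k + m + lam) + Sc / (m + lam)\<bar> \<le> k / (k + m) * (\<bar>Sf / k\<bar> + c)"
proof -
  define n where "n = k + m"
  have n: "n > 0" using k m by (simp add: n_def)
  have removed: "\<bar>- Sf / (n + lam)\<bar> \<le> \<bar>Sf\<bar> / n"
    using lam n by (simp add: abs_divide frac_le)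
  have "\<bar>Sc * k / ((m + lam) * (n + lam))\<bar> = \<bar>Sc\<bar> * k / ((m + lam) * (n + lam))"
    using k m lam n by (simp add: abs_mult)
  also have "\<dots> \<le> m * c * k / ((m + lam) * (n + lam))"
    using Sc k m lam n by (intro divide_right_mono mult_right_mono) auto
  also have "\<dots> = m / (m + lam) * (k * c / (n + lam))" by simp
  also have "\<dots> \<le> 1 * (k * c / n)"
    using k m lam n c by (intro mult_mono frac_le) (auto simp: divide_le_eq_1)
  finally have retained: "\<bar>Sc * k / ((m + lam) * (n + lam))\<bar> \<le> k * c / n" by simp
  have "\<bar>- (Sf + Sc) / (n + lam) + Sc / (m + lam)\<bar>
        = \<bar>- Sf / (n + lam) + Sc * k / ((m + lam) * (n + lam))\<bar>"
    using removal_shift_eq[of m lam k Sf Sc] m lam n by (simp add: n_def)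
  also have "\<dots> \<le> \<bar>Sf\<bar> / n + k * c / n"
    by (rule order_trans[OF abs_triangle_ineq add_mono[OF removed retained]])
  also have "\<dots> = k / n * (\<bar>Sf / k\<bar> + c)"
    using k n by (simp add: abs_divide field_simps)
  finally show ?thesis by (simp add: n_def)
qed

lemma leaf_value_remove_bound:
  fixes g :: "'a \<Rightarrow> real"
  assumes "finite I" "F \<subseteq> I" "F \<noteq> {}" "lam > 0" "c \<ge> 0"
    and bounded: "\<And>i. i \<in> I - F \<Longrightarrow> \<bar>g i\<bar> \<le> c"
  shows "\<bar>leaf_value g lam I - leaf_value g lam (I - F)\<bar>
         \<le> real (card F) / real (card I) * (\<bar>sum g F / real (card F)\<bar> + c)"
proof -
  have fin: "finite F" "finite (I - F)" using assms(1,2) finite_subset by auto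
  have split: "I = F \<union> (I - F)" using assms(2) by blast
  have card_I: "card I = card F + card (I - F)"
    using fin card_Un_disjoint[of F "I - F"] split by (metis Diff_disjoint)
  have sum_I: "sum g I = sum g F + sum g (I - F)"
    using fin sum.union_disjoint[of F "I - F" g] split by (metis Diff_disjoint)
  have "\<bar>sum g (I - F)\<bar> \<le> (\<Sum>i\<in>I - F. c)"
    using bounded by (intro order_trans[OF sum_abs sum_mono]) auto
  then have "\<bar>sum g (I - F)\<bar> \<le> real (card (I - F)) * c" by simp
  moreover have "real (card F) > 0" using fin assms(3) by (simp add: card_gt_0_iff)
  ultimately show ?thesis
    using removal_shift_bound[of "real (card F)" "real (card (I - F))" lam c
        "sum g (I - F)" "sum g F"] assms(4,5)
    by (simp add: leaf_value_def card_I sum_I add.assoc)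
qed

theorem theorem5:
  fixes I :: "'a set" and g :: "'a \<Rightarrow> real" and lam gl :: real
  assumes "lam > 0" and "gl > 0" and "finite I"
    and "{i\<in>I. \<bar>g i\<bar> > gl} \<noteq> {}"
  shows "\<bar>leaf_value g lam I - leaf_value g lam (I - {i\<in>I. \<bar>g i\<bar> > gl})\<bar>
         \<le> (real (card {i\<in>I. \<bar>g i\<bar> > gl}) / real (card I)) *
            (\<bar>(\<Sum>i\<in>{i\<in>I. \<bar>g i\<bar> > gl}. g i) / real (card {i\<in>I. \<bar>g i\<bar> > gl})\<bar> + gl)"
  using assms by (intro leaf_value_remove_bound) auto

end
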